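(* Let $a=(a_1,\dots,a_\ell)$ be a composition (a sequence of positive integers) of length $\ell\ge1$, and let $\tau_{112}(a)$ denote the partition $12\cdots \ell\,\ell^{a_\ell-1}(\ell-1)^{a_{\ell-1}-1}\cdots 1^{a_1-1}$. Define $F_a(x,y)=\sum_{n,k\ge0}p_{n,k}(112,\tau_{112}(a))x^ny^k$. Then \[F_a(x,y)=\sum_{j=0}^{\ell-1}\frac{x^{a_1+\cdots+a_j}y^j(1-x)}{\prod_{i=1}^{j+1}\bigl(1-x(1+y)+x^{a_i}y\bigr)},\] where the empty sum $a_1+\dots+a_0$ is $0$.
   Context: A set partition of $[n]=\{1,\dots,n\}$ with blocks $B_1,B_2,\dots,B_k$ ordered so that $\min B_1<\min B_2<\cdots$ is represented by its canonical sequential form $\pi=\pi_1\cdots\pi_n$ where $j\in B_{\pi_j}$; equivalently, $\pi$ is a word with $\pi_1=1$, onto $[k]$, and $\pi_{i+1}\le \max(\pi_1,\dots,\pi_i)+1$. For $n=0$ there is one (empty) partition. A partition $\pi$ contains a pattern (partition) $\tau=\tau_1\cdots\tau_m$ if $\pi$ has a subsequence $\pi_{f(1)}\cdots\pi_{f(m)}$ ($f(1)<\dots<f(m)$) order-isomorphic to $\tau$ (i.e. $\pi_{f(i)}<\pi_{f(j)}$ iff $\tau_i<\tau_j$, and $\pi_{f(i)}>\pi_{f(j)}$ iff $\tau_i>\tau_j$); otherwise it avoids $\tau$. $p_{n,k}(T)$ is the number of partitions of $[n]$ with exactly $k$ blocks avoiding every pattern in $T$; $a^q$ denotes $q$ copies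 of the symbol $a$. *)

theory Defs
  imports "HOL-Computational_Algebra.Formal_Power_Series"
          "HOL-Computational_Algebra.Polynomial"
          "HOL-Computational_Algebra.Fraction_Field"
begin

text \<open>Canonical sequential form of a set partition of [n] (restricted growth word):
  every letter is positive and at most one more than the maximum of the preceding
  letters (with max of the empty prefix taken as 0, forcing the first letter to be 1).\<close>
definition is_setpart :: "nat list \<Rightarrow> bool" where
  "is_setpart w \<longleftrightarrow>
     (\<forall>i < length w. 1 \<le> w ! i \<and> w ! i \<le> Suc (Max (insert 0 (set (take i w)))))"

definition nblocks :: "nat list \<Rightarrow> nat" where
  "nblocks w = Max (insert 0 (set w))"

definition order_iso :: "nat list \<Rightarrow> nat list \<Rightarrow> bool" where
  "order_iso s t \<longleftrightarrow> length s = length t \<and>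
     (\<forall>i < length s. \<forall>j < length s.
        (s ! i < s ! j \<longleftrightarrow> t ! i < t ! j) \<and> (s ! i > s ! j \<longleftrightarrow> t ! i > t ! j))"

definition contains :: "nat list \<Rightarrow> nat list \<Rightarrow> bool" where
  "contains w t \<longleftrightarrow> (\<exists>f :: nat \<Rightarrow> nat.
      strict_mono_on {..<length t} f \<and> (\<forall>i < length t. f i < length w) \<and>
      order_iso (map (\<lambda>i. w ! f i) [0..<length t]) t)"

definition pnk :: "nat \<Rightarrow> nat \<Rightarrow> nat list set \<Rightarrow> nat" where
  "pnk n k T = card {w. is_setpart w \<and> length w = n \<and> nblocks w = k \<and>
                        (\<forall>t\<in>T. \<not> contains w t)}"

text \<open>The partition 12...l l^(a_l - 1) (l-1)^(a_(l-1) - 1) ... 1^(a_1 - 1),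
  with the composition given as a 0-indexed list (a_i = a ! (i-1)).\<close>
definition tau112 :: "nat list \<Rightarrow> nat list" where
  "tau112 a = [1..<length a + 1] @
     concat (map (\<lambda>i. replicate (a ! (i - 1) - 1) i) (rev [1..<length a + 1]))"

text \<open>Bivariate generating function as a power series in x whose coefficients are
  polynomials in y (embedded into the fraction field of Z[y]).  Since a partition
  of [n] has at most n blocks, the inner sum over k is finite (k \<le> n).\<close>
definition yvar :: "int poly fract fps" where
  "yvar = fps_const (Fract [:0, 1:] 1)"

definition Fgf :: "nat list \<Rightarrow> int poly fract fps" where
  "Fgf a = Abs_fps (\<lambda>n. Fract (\<Sum>k\<le>n. monom (int (pnk n k {[1,1,2], tau112 a})) k) 1)"

end

theory Submission
  imports Defs "HOL-Library.Sublist" "HOL-Library.Multiset"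
begin

text \<open>A partition avoids 112 iff it is \<open>12\<cdots>k\<close> followed by a weakly decreasing word, so it is
  determined by the excesses \<open>c_i = |B_i| - 1\<close> of its blocks.  Between two such partitions,
  containment means that some subsequence of the excess vector of the text dominates the excess
  vector of the pattern entrywise.  Hence \<open>p_{n,k}\<close> counts vectors \<open>(c_1, \<dots>, c_k)\<close> of weight
  \<open>n - k\<close> none of whose subsequences dominates \<open>b = (a_1 - 1, \<dots>, a_\<ell> - 1)\<close>.  Splitting off
  \<open>c_1\<close> gives \<open>G_b = 1 + x y (x^b_1 G_b' + (1 - x^b_1) G_b) / (1 - x)\<close> with \<open>b' = (b_2, \<dots>)\<close>,
  which unrolls to the stated sum.\<close>

declare upt_Suc[simp del]

section \<open>Partitions avoiding 112\<close>

fun desc_tail :: "nat list \<Rightarrow> nat list" where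
  "desc_tail [] = []"
| "desc_tail (c # cs) = map Suc (desc_tail cs) @ replicate c 1"

text \<open>\<open>part112 [c_1, \<dots>, c_k]\<close> is the 112-avoiding partition \<open>12\<cdots>k k^c_k \<cdots> 1^c_1\<close>,
  whose block \<open>i\<close> has \<open>c_i + 1\<close> elements; \<open>tau112 a = part112 [a_1 - 1, \<dots>, a_\<ell> - 1]\<close>.\<close>
definition part112 :: "nat list \<Rightarrow> nat list" where
  "part112 cs = [1..<Suc (length cs)] @ desc_tail cs"

lemma set_desc_tail: "set (desc_tail cs) \<subseteq> {1..length cs}"
  by (induction cs) auto

lemma sorted_desc_tail: "sorted_wrt (\<ge>) (desc_tail cs)"
proof (induction cs)
  case (Cons c cs)
  have "sorted_wrt (\<ge>) (replicate c (1::nat))"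
    by (induction c) auto
  with Cons show ?case
    using set_desc_tail[of cs] by (fastforce simp: sorted_wrt_append sorted_wrt_map)
qed simp

lemma length_desc_tail: "length (desc_tail cs) = sum_list cs"
  by (induction cs) auto

lemma count_list_replicate: "count_list (replicate n x) y = (if x = y then n else 0)"
  by (induction n) auto

lemma count_desc_tail:
  "count_list (desc_tail cs) (Suc i) = (if i < length cs then cs ! i else 0)"
proof (induction cs arbitrary: i)
  case (Cons c cs)
  have "count_list (map Suc xs) (Suc j) = count_list xs j" for xs j
    by (rule count_list_map_conv) simp
  moreover have "count_list (map Suc (desc_tail cs)) (Suc 0) = 0"
    using set_desc_tail[of cs] by (auto simp: count_list_0_iff)
  ultimately show ?case
    using Cons.IH by (cases i) (auto simp: count_list_replicate)
qed simp

lemma length_part112: "length (part112 cs) = length cs + sum_list cs"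
  by (simp add: part112_def length_desc_tail)

lemma nth_part112: "i < length cs \<Longrightarrow> part112 cs ! i = Suc i"
  by (simp add: part112_def nth_append)

lemma set_part112: "set (part112 cs) = {1..length cs}"
  using set_desc_tail[of cs] by (auto simp: part112_def)

lemma part112_Cons: "part112 (c # cs) = 1 # map Suc (part112 cs) @ replicate c 1"
  by (simp add: part112_def map_Suc_upt upt_conv_Cons)

lemma count_list_upt_Suc: "count_list [1..<Suc k] (Suc i) = (if i < k then 1 else 0)"
  by (induction k) (auto simp: upt_Suc)

lemma count_part112:
  "count_list (part112 cs) (Suc i) = (if i < length cs then Suc (cs ! i) else 0)"
  using count_list_upt_Suc[of "length cs" i] by (simp add: part112_def count_desc_tail)

lemma desc_tail_eq_concat:
  "desc_tail cs = concat (map (\<lambda>i. replicate (cs ! (i - 1)) i) (rev [1..<Suc (length cs)]))"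
proof (induction cs)
  case (Cons c cs)
  have "rev [1..<Suc (length (c # cs))] = map Suc (rev [1..<Suc (length cs)]) @ [1]"
    by (simp add: upt_conv_Cons map_Suc_upt rev_map[symmetric])
  then show ?case
    using Cons by (simp add: map_concat, intro arg_cong[where f=concat] map_cong)
                  (auto simp: nth_Cons' split: nat.splits)
qed simp

lemma tau112_eq_part112: "tau112 a = part112 (map (\<lambda>x. x - 1) a)"
  unfolding tau112_def part112_def desc_tail_eq_concat
  by (auto intro!: arg_cong[where f=concat] map_cong)

lemma Max_upt_append:
  "set D \<subseteq> {1..k} \<Longrightarrow> Max (insert 0 (set ([1..<Suc k] @ D))) = k"
  by (rule Max_eqI) auto

lemma nblocks_part112: "nblocks (part112 cs) = length cs"
  unfolding nblocks_def part112_def using Max_upt_append[OF set_desc_tail] .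

lemma inj_part112: "inj part112"
proof (rule injI)
  fix bs cs assume eq: "part112 bs = part112 cs"
  then have "length bs = length cs"
    by (metis nblocks_part112)
  moreover have "bs ! i = cs ! i" if "i < length bs" for i
    using arg_cong[OF eq, of "\<lambda>w. count_list w (Suc i)"] that \<open>length bs = length cs\<close>
    by (simp add: count_part112)
  ultimately show "bs = cs"
    by (simp add: nth_equalityI)
qed

lemma is_setpart_snoc:
  "is_setpart (w @ [x]) \<longleftrightarrow> is_setpart w \<and> 1 \<le> x \<and> x \<le> Suc (Max (insert 0 (set w)))"
  unfolding is_setpart_def
  by (auto simp: nth_append less_Suc_eq)

lemma is_setpart_upt: "is_setpart [1..<Suc k]"
proof (induction k)
  case (Suc k)
  then show ?case
    using Max_upt_append[of "[]" k] by (simp add: upt_Suc[of _ "Suc k"] is_setpart_snoc)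
qed (simp add: is_setpart_def)

lemma is_setpart_append_bounded:
  assumes "is_setpart w" and "set D \<subseteq> {1..Max (insert 0 (set w))}"
  shows "is_setpart (w @ D)"
  using assms(2)
proof (induction D rule: rev_induct)
  case (snoc x D)
  have mono: "Max (insert 0 (set w)) \<le> Max (insert 0 (set (w @ D)))"
    by (rule Max_mono) auto
  from snoc have "is_setpart (w @ D)" and x: "1 \<le> x" "x \<le> Max (insert 0 (set w))"
    by auto
  with le_SucI[OF order_trans[OF x(2) mono]] show ?case
    by (simp only: is_setpart_snoc flip: append_assoc)
qed (simp add: assms(1))

lemma is_setpart_part112: "is_setpart (part112 cs)"
  unfolding part112_def
  using is_setpart_append_bounded[OF is_setpart_upt] set_desc_tail Max_upt_append[of "[]"]
  by simp

lemma order_iso_less_iff: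
  "order_iso xs ys \<Longrightarrow> i < length xs \<Longrightarrow> j < length xs \<Longrightarrow> xs ! i < xs ! j \<longleftrightarrow> ys ! i < ys ! j"
  unfolding order_iso_def by blast

lemma order_iso_eq_iff:
  "order_iso xs ys \<Longrightarrow> i < length xs \<Longrightarrow> j < length xs \<Longrightarrow> xs ! i = xs ! j \<longleftrightarrow> ys ! i = ys ! j"
proof -
  assume "order_iso xs ys" "i < length xs" "j < length xs"
  then have "xs ! i < xs ! j \<longleftrightarrow> ys ! i < ys ! j" "xs ! j < xs ! i \<longleftrightarrow> ys ! j < ys ! i"
    unfolding order_iso_def by auto
  then show ?thesis
    by (metis nat_neq_iff)
qed

definition has_112 :: "nat list \<Rightarrow> bool" where
  "has_112 w \<longleftrightarrow> (\<exists>p q r. p < q \<and> q < r \<and> r < length w \<and> w ! p = w ! q \<and> w ! q < w ! r)"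

lemma contains_112_iff: "contains w [1, 1, 2] \<longleftrightarrow> has_112 w"
proof
  have upt_3: "[0..<length [1, 1, 2::nat]] = [0, 1, 2]"
    by (simp add: upt_rec)
  show "has_112 w" if "contains w [1, 1, 2]"
  proof -
    from that obtain f :: "nat \<Rightarrow> nat" where mono: "strict_mono_on {..<length [1, 1, 2::nat]} f"
      and len: "\<forall>i<length [1, 1, 2::nat]. f i < length w"
      and "order_iso (map (\<lambda>i. w ! f i) [0..<length [1, 1, 2::nat]]) [1, 1, 2]"
      unfolding contains_def by blast
    then have iso: "order_iso [w ! f 0, w ! f 1, w ! f 2] [1, 1, 2]"
      by (simp only: upt_3 list.map)
    have "f 0 < f 1" "f 1 < f 2" "f 2 < length w"
      using mono len by (simp_all add: strict_mono_on_def)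
    moreover have "w ! f 0 = w ! f 1" "w ! f 1 < w ! f 2"
      using order_iso_eq_iff[OF iso, of 0 1] order_iso_less_iff[OF iso, of 1 2] by simp_all
    ultimately show ?thesis
      unfolding has_112_def by blast
  qed
  show "contains w [1, 1, 2]" if "has_112 w"
  proof -
    from that obtain p q r where pqr: "p < q" "q < r" "r < length w" "w ! p = w ! q" "w ! q < w ! r"
      unfolding has_112_def by blast
    let ?f = "\<lambda>i. [p, q, r] ! i"
    have less_3: "i < length [1, 1, 2::nat] \<longleftrightarrow> i = 0 \<or> i = 1 \<or> i = 2" for i
      by auto
    have "strict_mono_on {..<length [1, 1, 2::nat]} ?f"
      using pqr unfolding strict_mono_on_def less_3 lessThan_iff by auto
    moreover have "order_iso (map (\<lambda>i. w ! ?f i) [0..<length [1, 1, 2::nat]]) [1, 1, 2]"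
      using pqr unfolding upt_3 order_iso_def by (simp add: All_less_Suc)
    ultimately show ?thesis
      using pqr unfolding contains_def less_3 by (intro exI[of _ ?f]) auto
  qed
qed

lemma has_112_snoc:
  "i < j \<Longrightarrow> j < length w \<Longrightarrow> w ! i = w ! j \<Longrightarrow> w ! j < x \<Longrightarrow> has_112 (w @ [x])"
  unfolding has_112_def
  by (intro exI[of _ i] exI[of _ j] exI[of _ "length w"]) (simp add: nth_append)

lemma has_112_append: "has_112 w \<Longrightarrow> has_112 (w @ u)"
proof -
  assume "has_112 w"
  then obtain p q r where "p < q" "q < r" "r < length w" "w ! p = w ! q" "w ! q < w ! r"
    unfolding has_112_def by blast
  then show ?thesis
    unfolding has_112_def by (intro exI[of _ p] exI[of _ q] exI[of _ r]) (simp add: nth_append)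
qed

lemma last_le_of_sorted_desc:
  assumes "sorted_wrt (\<ge>) D" "d \<in> set D"
  shows "last D \<le> (d :: 'a :: linorder)"
  using assms by (induction D) (auto split: if_splits)

lemma setpart_avoiding_112_shape:
  "is_setpart w \<Longrightarrow> \<not> has_112 w \<Longrightarrow>
   \<exists>k D. w = [1..<Suc k] @ D \<and> sorted_wrt (\<ge>) D \<and> set D \<subseteq> {1..k}"
proof (induction w rule: rev_induct)
  case Nil
  show ?case
    by (intro exI[of _ 0] exI[of _ "[]"]) simp
next
  case (snoc x w)
  then obtain k D where w: "w = [1..<Suc k] @ D" and D: "sorted_wrt (\<ge>) D" "set D \<subseteq> {1..k}"
    using has_112_append by (auto simp: is_setpart_snoc)
  have "1 \<le> x" "x \<le> Suc (Max (insert 0 (set w)))"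
    using snoc.prems(1) by (simp_all add: is_setpart_snoc)
  then have x: "1 \<le> x" "x \<le> Suc k"
    using Max_upt_append[OF D(2)] w by simp_all
  show ?case
  proof (cases "D = []")
    case True
    show ?thesis
    proof (cases "x = Suc k")
      case True
      then show ?thesis
        using w \<open>D = []\<close> by (intro exI[of _ "Suc k"] exI[of _ "[]"]) (simp add: upt_Suc)
    next
      case False
      then show ?thesis
        using w \<open>D = []\<close> x by (intro exI[of _ k] exI[of _ "[x]"]) simp
    qed
  next
    case False
    then have last_D: "last D \<in> {1..k}"
      using D(2) last_in_set by blast
    \<comment> \<open>A letter above \<open>last D\<close> would complete a 112 with the two earlier occurrences of \<open>last D\<close>.\<close>
    have "x \<le> last D"
    proof (rule ccontr)
      assume "\<not> x \<le> last D"
      have len: "length w = k + length D" "0 < length D"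
        using w False by simp_all
      have "w ! (last D - 1) = last D"
        using w last_D by (auto simp: nth_append)
      moreover have "w ! (length w - 1) = last D"
        using w False last_conv_nth[of w] by simp
      moreover have "last D - 1 < length w - 1" "length w - 1 < length w"
        using len last_D unfolding atLeastAtMost_iff by linarith+
      ultimately have "has_112 (w @ [x])"
        using has_112_snoc[of "last D - 1" "length w - 1" w x] \<open>\<not> x \<le> last D\<close> by simp
      with snoc.prems show False
        by simp
    qed
    then have "sorted_wrt (\<ge>) (D @ [x])"
      using D(1) last_le_of_sorted_desc[OF D(1)] by (auto simp: sorted_wrt_append intro: le_trans)
    then show ?thesis
      using w D(2) x \<open>x \<le> last D\<close> last_D by (intro exI[of _ k] exI[of _ "D @ [x]"]) auto
  qed
qed

lemma sorted_desc_eq_desc_tail: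
  assumes "sorted_wrt (\<ge>) D" and "set D \<subseteq> {1..k}"
  shows "D = desc_tail (map (\<lambda>i. count_list D (Suc i)) [0..<k])"
proof -
  let ?cs = "map (\<lambda>i. count_list D (Suc i)) [0..<k]"
  have counts: "count_list D v = count_list (desc_tail ?cs) v" for v
  proof (cases "\<exists>i<k. v = Suc i")
    case True
    then obtain i where "i < k" "v = Suc i"
      by blast
    then show ?thesis
      by (simp add: count_desc_tail)
  next
    case False
    then have "v \<notin> {1..k}"
      by (auto simp: Suc_le_eq gr0_conv_Suc)
    then have "v \<notin> set D" "v \<notin> set (desc_tail ?cs)"
      using assms(2) set_desc_tail[of ?cs] by auto
    then show ?thesis
      by simp
  qed
  have "mset (rev D) = mset (rev (desc_tail ?cs))"
  proof (unfold mset_rev, rule multiset_eqI)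
    show "count (mset D) v = count (mset (desc_tail ?cs)) v" for v
      unfolding count_mset by (rule counts)
  qed
  moreover have "sorted (rev D)" "sorted (rev (desc_tail ?cs))"
    using assms(1) sorted_desc_tail by (simp_all add: sorted_wrt_rev)
  ultimately have "rev D = rev (desc_tail ?cs)"
    using properties_for_sort sorted_sort_id by metis
  then show ?thesis
    by simp
qed

lemma not_has_112_part112: "\<not> has_112 (part112 cs)"
proof
  assume "has_112 (part112 cs)"
  then obtain p q r where pqr: "p < q" "q < r" "r < length (part112 cs)"
    "part112 cs ! p = part112 cs ! q" "part112 cs ! q < part112 cs ! r"
    unfolding has_112_def by blast
  let ?k = "length cs"
  show False
  proof (cases "q < ?k")
    case True
    then show False
      using pqr nth_part112[of p cs] nth_part112[of q cs] by simp
  next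
    case False
    have "part112 cs ! q = desc_tail cs ! (q - ?k)" "part112 cs ! r = desc_tail cs ! (r - ?k)"
      using False pqr by (simp_all add: part112_def nth_append)
    moreover have "q - ?k < r - ?k" "r - ?k < length (desc_tail cs)"
      using pqr False by (simp_all add: length_part112 length_desc_tail)
    ultimately show False
      using pqr sorted_wrt_nth_less[OF sorted_desc_tail, of "q - ?k" "r - ?k" cs] by simp
  qed
qed

lemma setpart_not_has_112_iff: "is_setpart w \<and> \<not> has_112 w \<longleftrightarrow> w \<in> range part112"
proof
  assume "is_setpart w \<and> \<not> has_112 w"
  then obtain k D where "w = [1..<Suc k] @ D" "sorted_wrt (\<ge>) D" "set D \<subseteq> {1..k}"
    using setpart_avoiding_112_shape by blast
  then have "w = part112 (map (\<lambda>i. count_list D (Suc i)) [0..<k])"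
    unfolding part112_def using sorted_desc_eq_desc_tail by simp
  then show "w \<in> range part112"
    by blast
qed (auto simp: is_setpart_part112 not_has_112_part112)

section \<open>Containment between 112-avoiding partitions\<close>

lemma list_emb_iff_index:
  "list_emb P xs ys \<longleftrightarrow>
   (\<exists>f. strict_mono_on {..<length xs} f \<and> (\<forall>i<length xs. f i < length ys \<and> P (xs ! i) (ys ! f i)))"
proof
  show "\<exists>f. strict_mono_on {..<length xs} f \<and> (\<forall>i<length xs. f i < length ys \<and> P (xs ! i) (ys ! f i))"
    if "list_emb P xs ys"
    using that
  proof (induction rule: list_emb.induct)
    case (list_emb_Nil ys)
    then show ?case
      by (auto simp: strict_mono_on_def)
  next
    case (list_emb_Cons xs ys y)
    then obtain f where "strict_mono_on {..<length xs} f"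
      and "\<forall>i<length xs. f i < length ys \<and> P (xs ! i) (ys ! f i)"
      by blast
    then show ?case
      by (intro exI[of _ "Suc \<circ> f"]) (auto simp: strict_mono_on_def)
  next
    case (list_emb_Cons2 x y xs ys)
    then obtain f where mono: "strict_mono_on {..<length xs} f"
      and f: "\<forall>i<length xs. f i < length ys \<and> P (xs ! i) (ys ! f i)"
      by blast
    let ?g = "\<lambda>i. case i of 0 \<Rightarrow> 0 | Suc j \<Rightarrow> Suc (f j)"
    have "strict_mono_on {..<length (x # xs)} ?g"
      using mono unfolding strict_mono_on_def by (auto split: nat.split)
    moreover have "\<forall>i<length (x # xs). ?g i < length (y # ys) \<and> P ((x # xs) ! i) ((y # ys) ! ?g i)"
      using f list_emb_Cons2.hyps(1) by (auto split: nat.split)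
    ultimately show ?case
      by blast
  qed
  show "list_emb P xs ys"
    if "\<exists>f. strict_mono_on {..<length xs} f \<and> (\<forall>i<length xs. f i < length ys \<and> P (xs ! i) (ys ! f i))"
    using that
  proof (induction xs arbitrary: ys)
    case (Cons x xs)
    then obtain f where mono: "strict_mono_on {..<length (x # xs)} f"
      and f: "\<forall>i<length (x # xs). f i < length ys \<and> P ((x # xs) ! i) (ys ! f i)"
      by blast
    let ?m = "f 0"
    have m: "?m < length ys" "P x (ys ! ?m)"
      using f by auto
    have later: "?m < f (Suc i)" if "i < length xs" for i
      using mono that by (auto simp: strict_mono_on_def)
    have "list_emb P xs (drop (Suc ?m) ys)"
    proof (rule Cons.IH, intro exI conjI)
      show "strict_mono_on {..<length xs} (\<lambda>i. f (Suc i) - Suc ?m)"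
        using mono later unfolding strict_mono_on_def
        by (auto intro!: diff_less_mono simp: Suc_le_eq)
      show "\<forall>i<length xs. f (Suc i) - Suc ?m < length (drop (Suc ?m) ys) \<and>
              P (xs ! i) (drop (Suc ?m) ys ! (f (Suc i) - Suc ?m))"
      proof (intro allI impI)
        fix i assume i: "i < length xs"
        then have "f (Suc i) < length ys" "P (xs ! i) (ys ! f (Suc i))" "Suc ?m \<le> f (Suc i)"
          using f later[OF i] by auto
        then show "f (Suc i) - Suc ?m < length (drop (Suc ?m) ys) \<and>
            P (xs ! i) (drop (Suc ?m) ys ! (f (Suc i) - Suc ?m))"
          by simp
      qed
    qed
    with m have "list_emb P (x # xs) (take ?m ys @ ys ! ?m # drop (Suc ?m) ys)"
      by (intro list_emb_append2) simp
    then show ?case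
      using id_take_nth_drop[OF m(1)] by simp
  qed simp
qed

lemma contains_of_subseq_map:
  assumes "strict_mono h" and "subseq (map h t) w"
  shows "contains w t"
proof -
  obtain f where mono: "strict_mono_on {..<length t} f"
    and f: "\<forall>i<length t. f i < length w \<and> h (t ! i) = w ! f i"
    using assms(2) unfolding list_emb_iff_index by auto
  have "map (\<lambda>i. w ! f i) [0..<length t] = map h t"
    using f by (intro nth_equalityI) auto
  moreover have "order_iso (map h t) t"
    unfolding order_iso_def using assms(1) by (simp add: strict_mono_less)
  ultimately show ?thesis
    unfolding contains_def using mono f by auto
qed

lemma count_list_conv_card: "count_list xs v = card {p. p < length xs \<and> xs ! p = v}"
proof -
  have "count_list xs v = length (filter (\<lambda>x. x = v) xs)"
    by (induction xs) auto
  then show ?thesis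
    by (simp add: length_filter_conv_card)
qed

lemma count_list_le_occurrence:
  assumes mono: "strict_mono_on {..<length t} f" and len: "\<forall>i<length t. f i < length w"
    and iso: "order_iso (map (\<lambda>i. w ! f i) [0..<length t]) t" and i: "i < length t"
  shows "count_list t (t ! i) \<le> count_list w (w ! f i)"
  unfolding count_list_conv_card
proof (rule card_inj_on_le)
  show "inj_on f {p. p < length t \<and> t ! p = t ! i}"
    using strict_mono_on_imp_inj_on[OF mono] by (rule inj_on_subset) auto
  show "f ` {p. p < length t \<and> t ! p = t ! i} \<subseteq> {q. q < length w \<and> w ! q = w ! f i}"
    using order_iso_eq_iff[OF iso] len i by auto
qed simp

lemma emb_of_contains_part112:
  assumes "contains (part112 cs) (part112 bs)"
  shows "list_emb (\<le>) bs cs"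
proof -
  let ?w = "part112 cs" and ?t = "part112 bs"
  obtain f where mono: "strict_mono_on {..<length ?t} f" and len: "\<forall>i<length ?t. f i < length ?w"
    and iso: "order_iso (map (\<lambda>i. ?w ! f i) [0..<length ?t]) ?t"
    using assms unfolding contains_def by blast
  have bs_t: "i < length ?t" if "i < length bs" for i
    using that by (simp add: length_part112)
  \<comment> \<open>Block \<open>i + 1\<close> of the pattern lands in a block of the text that is at least as large.\<close>
  have block: "\<exists>j. ?w ! f i = Suc j \<and> j < length cs \<and> bs ! i \<le> cs ! j" if i: "i < length bs" for i
  proof -
    have "Suc (bs ! i) \<le> count_list ?w (?w ! f i)"
      using count_list_le_occurrence[OF mono len iso bs_t[OF i]] i
      by (simp add: nth_part112 count_part112)
    moreover have "0 \<notin> set ?w"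
      by (simp add: set_part112)
    ultimately show ?thesis
      by (cases "?w ! f i") (auto simp: count_part112 split: if_splits)
  qed
  let ?g = "\<lambda>i. ?w ! f i - 1"
  have "strict_mono_on {..<length bs} ?g"
    unfolding strict_mono_on_def
  proof (intro allI impI)
    fix r s assume rs: "r \<in> {..<length bs} \<and> s \<in> {..<length bs} \<and> r < s"
    then have "?w ! f r < ?w ! f s"
      using order_iso_less_iff[OF iso, of r s] bs_t by (simp add: nth_part112)
    with block[of r] rs show "?g r < ?g s"
      by auto
  qed
  moreover have "\<forall>i<length bs. ?g i < length cs \<and> bs ! i \<le> cs ! ?g i"
    using block by fastforce
  ultimately show ?thesis
    unfolding list_emb_iff_index by blast
qed

lemma subseq_part112_of_emb:
  "list_emb (\<le>) bs cs \<Longrightarrow> \<exists>h. strict_mono h \<and> subseq (map h (part112 bs)) (part112 cs)"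
proof (induction rule: list_emb.induct)
  case (list_emb_Nil cs)
  show ?case
    by (rule exI[of _ id]) (simp add: part112_def strict_mono_def)
next
  case (list_emb_Cons bs cs c)
  then obtain h where h: "strict_mono h" "subseq (map h (part112 bs)) (part112 cs)"
    by blast
  have "subseq (map (Suc \<circ> h) (part112 bs)) (part112 (c # cs))"
    using subseq_map[OF h(2), of Suc] by (auto simp: part112_Cons)
  with h(1) show ?case
    by (intro exI[of _ "Suc \<circ> h"]) (simp add: strict_mono_def o_def)
next
  case (list_emb_Cons2 b c bs cs)
  then obtain h where h: "strict_mono h" "subseq (map h (part112 bs)) (part112 cs)"
    by blast
  \<comment> \<open>Keep block 1 in place and shift the image of the remaining blocks up by one.\<close>
  define h' where "h' v = (case v of 0 \<Rightarrow> 0 | Suc 0 \<Rightarrow> 1 | Suc u \<Rightarrow> Suc (h u))" for v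
  have "0 < h (Suc 0)"
    using strict_monoD[OF h(1), of 0 "Suc 0"] by simp
  with h(1) have "strict_mono h'"
    unfolding strict_mono_Suc_iff h'_def by (auto simp: strict_mono_less split: nat.split)
  moreover have "map h' (part112 (b # bs)) = 1 # map Suc (map h (part112 bs)) @ replicate b 1"
    using set_part112[of bs] by (auto simp: part112_Cons h'_def split: nat.split)
  moreover have "subseq (replicate b (1::nat)) (replicate c 1)"
    using list_emb_Cons2.hyps(1) replicate_add[of "c - b" b "1::nat"] by (simp add: list_emb_append2)
  then have "subseq (1 # map Suc (map h (part112 bs)) @ replicate b 1) (part112 (c # cs))"
    unfolding part112_Cons using subseq_map[OF h(2), of Suc]
    by (intro list_emb.intros(3) list_emb_append_mono) simp_all
  ultimately show ?case
    by metis
qed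

lemma contains_part112_iff: "contains (part112 cs) (part112 bs) \<longleftrightarrow> list_emb (\<le>) bs cs"
  using emb_of_contains_part112 subseq_part112_of_emb contains_of_subseq_map by blast

section \<open>Counting by excess vectors\<close>

definition undominated :: "nat list \<Rightarrow> nat \<Rightarrow> nat \<Rightarrow> nat list set" where
  "undominated bs n k = {cs. length cs = k \<and> k + sum_list cs = n \<and> \<not> list_emb (\<le>) bs cs}"

lemma pnk_eq_card_undominated:
  "pnk n k {[1, 1, 2], tau112 a} = card (undominated (map (\<lambda>x. x - 1) a) n k)"
proof -
  let ?bs = "map (\<lambda>x. x - 1) a"
  have "{w. is_setpart w \<and> length w = n \<and> nblocks w = k \<and> (\<forall>t\<in>{[1, 1, 2], tau112 a}. \<not> contains w t)}
        = part112 ` undominated ?bs n k" (is "?avoiders = _")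
  proof
    show "?avoiders \<subseteq> part112 ` undominated ?bs n k"
    proof
      fix w assume w: "w \<in> ?avoiders"
      then obtain cs where "w = part112 cs"
        using setpart_not_has_112_iff[of w] contains_112_iff[of w] by auto
      with w show "w \<in> part112 ` undominated ?bs n k"
        by (auto simp: tau112_eq_part112 contains_part112_iff length_part112 nblocks_part112
            undominated_def)
    qed
    show "part112 ` undominated ?bs n k \<subseteq> ?avoiders"
      using is_setpart_part112 not_has_112_part112
      by (auto simp: contains_112_iff[simplified] tau112_eq_part112 contains_part112_iff
          length_part112 nblocks_part112 undominated_def)
  qed
  then show ?thesis
    unfolding pnk_def by (simp add: card_image inj_on_subset[OF inj_part112])
qed

lemma finite_undominated: "finite (undominated bs n k)"
proof (rule finite_subset)
  show "undominated bs n k \<subseteq> {cs. set cs \<subseteq> {..n} \<and> length cs = k}"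
    unfolding undominated_def using member_le_sum_list by fastforce
qed (simp add: finite_lists_length_eq)

lemma undominated_Nil: "undominated [] n k = {}"
  by (simp add: undominated_def)

lemma undominated_empty: "n < k \<Longrightarrow> undominated bs n k = {}"
  by (auto simp: undominated_def)

lemma undominated_Cons_0: "undominated (b # bs) n 0 = (if n = 0 then {[]} else {})"
  by (auto simp: undominated_def)

lemma undominated_Cons_Suc:
  "undominated (b # bs) (Suc m) (Suc k) =
   (\<Union>c\<le>m. (#) c ` (if b \<le> c then undominated bs (m - c) k else undominated (b # bs) (m - c) k))"
proof
  show "undominated (b # bs) (Suc m) (Suc k) \<subseteq>
    (\<Union>c\<le>m. (#) c ` (if b \<le> c then undominated bs (m - c) k else undominated (b # bs) (m - c) k))"
  proof
    fix xs assume "xs \<in> undominated (b # bs) (Suc m) (Suc k)"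
    then obtain c cs where "xs = c # cs" "length cs = k" "Suc k + (c + sum_list cs) = Suc m"
      "\<not> list_emb (\<le>) (b # bs) (c # cs)"
      unfolding undominated_def by (cases xs) auto
    then show "xs \<in> (\<Union>c\<le>m. (#) c ` (if b \<le> c then undominated bs (m - c) k
                                          else undominated (b # bs) (m - c) k))"
      by (intro UN_I[of c]) (auto simp: undominated_def)
  qed
qed (auto simp: undominated_def split: if_splits)

lemma card_undominated_Cons_Suc:
  "card (undominated (b # bs) (Suc m) (Suc k)) =
   (\<Sum>c\<le>m. if b \<le> c then card (undominated bs (m - c) k) else card (undominated (b # bs) (m - c) k))"
proof -
  have "card (undominated (b # bs) (Suc m) (Suc k)) =
    (\<Sum>c\<le>m. card ((#) c ` (if b \<le> c then undominated bs (m - c) k else undominated (b # bs) (m - c) k)))"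
    unfolding undominated_Cons_Suc by (rule card_UN_disjoint) (auto simp: finite_undominated)
  also have "\<dots> = (\<Sum>c\<le>m. card (if b \<le> c then undominated bs (m - c) k else undominated (b # bs) (m - c) k))"
    by (intro sum.cong refl card_image) simp
  finally show ?thesis
    by (simp add: if_distrib)
qed

section \<open>The generating function\<close>

unbundle fps_syntax

definition y_fract :: "int poly fract" where
  "y_fract = Fract [:0, 1:] 1"

lemma yvar_eq: "yvar = fps_const y_fract"
  by (simp add: yvar_def y_fract_def)

lemma Fract_add_1: "Fract (p + q) 1 = Fract p 1 + Fract (q :: 'a :: idom) 1"
  by simp

lemma Fract_mult_1: "Fract (p * q) 1 = Fract p 1 * Fract (q :: 'a :: idom) 1"
  by simp

lemma Fract_sum: "finite A \<Longrightarrow> Fract (\<Sum>k\<in>A. f k) 1 = (\<Sum>k\<in>A. Fract (f k :: 'a :: idom) 1)"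
  by (induction A rule: finite_induct) (simp_all add: Zero_fract_def Fract_add_1 del: add_fract)

lemma Fract_power: "Fract (p ^ k) 1 = Fract (p :: 'a :: idom) 1 ^ k"
  by (induction k) (simp_all add: One_fract_def Fract_mult_1 del: mult_fract)

lemma Fract_monom: "Fract (monom (int m) k) 1 = of_nat m * y_fract ^ k"
proof -
  have "Fract (monom (int m) k) 1 = Fract [:int m:] 1 * Fract ([:0, 1:] ^ k) 1"
    by (simp add: monom_altdef)
  also have "Fract [:int m:] 1 = of_nat m"
    by (metis Fract_of_nat_eq of_nat_poly of_int_of_nat_eq)
  finally show ?thesis
    by (simp add: Fract_power y_fract_def)
qed

definition undominated_gf :: "nat list \<Rightarrow> int poly fract fps" where
  "undominated_gf bs = Abs_fps (\<lambda>n. \<Sum>k\<le>n. of_nat (card (undominated bs n k)) * y_fract ^ k)"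

lemma Fgf_eq_undominated_gf: "Fgf a = undominated_gf (map (\<lambda>x. x - 1) a)"
  unfolding Fgf_def undominated_gf_def pnk_eq_card_undominated
  by (simp add: Fract_sum Fract_monom)

lemma undominated_gf_nth:
  "n \<le> N \<Longrightarrow> undominated_gf bs $ n = (\<Sum>k\<le>N. of_nat (card (undominated bs n k)) * y_fract ^ k)"
proof -
  assume "n \<le> N"
  then have "(\<Sum>k\<le>n. of_nat (card (undominated bs n k)) * y_fract ^ k) =
             (\<Sum>k\<le>N. of_nat (card (undominated bs n k)) * y_fract ^ k)"
    by (intro sum.mono_neutral_left) (auto simp: undominated_empty not_le)
  then show ?thesis
    by (simp add: undominated_gf_def)
qed

lemma undominated_gf_Nil: "undominated_gf [] = 0"
  by (simp add: undominated_gf_def undominated_Nil fps_eq_iff)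

definition geom_head :: "nat \<Rightarrow> int poly fract fps" where
  "geom_head b = Abs_fps (\<lambda>j. if j < b then 1 else 0)"

definition geom_tail :: "nat \<Rightarrow> int poly fract fps" where
  "geom_tail b = Abs_fps (\<lambda>j. if b \<le> j then 1 else 0)"

lemma one_minus_X_times_geom_head: "(1 - fps_X) * geom_head b = 1 - fps_X ^ b"
  by (rule fps_ext) (auto simp: algebra_simps geom_head_def)

lemma one_minus_X_times_geom_tail: "(1 - fps_X) * geom_tail b = fps_X ^ b"
  by (rule fps_ext) (auto simp: algebra_simps geom_tail_def)

lemma undominated_gf_Cons_rec:
  "undominated_gf (b # bs) =
   1 + fps_X * (yvar * (geom_tail b * undominated_gf bs + geom_head b * undominated_gf (b # bs)))"
proof (rule fps_ext)
  fix n
  show "undominated_gf (b # bs) $ n =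
    (1 + fps_X * (yvar * (geom_tail b * undominated_gf bs + geom_head b * undominated_gf (b # bs)))) $ n"
  proof (cases n)
    case 0
    then show ?thesis
      by (simp add: undominated_gf_def undominated_Cons_0)
  next
    case (Suc m)
    define T where "T c k = (if b \<le> c then card (undominated bs (m - c) k)
                             else card (undominated (b # bs) (m - c) k))" for c k
    have "(geom_tail b * undominated_gf bs + geom_head b * undominated_gf (b # bs)) $ m =
          (\<Sum>c\<le>m. geom_tail b $ c * undominated_gf bs $ (m - c) +
                    geom_head b $ c * undominated_gf (b # bs) $ (m - c))"
      by (simp add: fps_mult_nth sum.distrib atLeast0AtMost)
    also have "\<dots> = (\<Sum>c\<le>m. \<Sum>k\<le>m. of_nat (T c k) * y_fract ^ k)"
      by (intro sum.cong refl)
         (simp add: undominated_gf_nth[of "m - _" m] geom_head_def geom_tail_def T_def)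
    finally have rec: "(geom_tail b * undominated_gf bs + geom_head b * undominated_gf (b # bs)) $ m =
                       (\<Sum>c\<le>m. \<Sum>k\<le>m. of_nat (T c k) * y_fract ^ k)" .
    have "undominated_gf (b # bs) $ Suc m =
          (\<Sum>k\<le>Suc m. of_nat (card (undominated (b # bs) (Suc m) k)) * y_fract ^ k)"
      by (simp add: undominated_gf_def)
    also have "\<dots> = (\<Sum>k\<le>m. of_nat (card (undominated (b # bs) (Suc m) (Suc k))) * y_fract ^ Suc k)"
      by (subst sum.atMost_Suc_shift) (simp add: undominated_Cons_0)
    also have "\<dots> = y_fract * (\<Sum>c\<le>m. \<Sum>k\<le>m. of_nat (T c k) * y_fract ^ k)"
      by (subst sum.swap)
         (simp add: card_undominated_Cons_Suc T_def sum_distrib_left sum_distrib_right mult_ac)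
    finally show ?thesis
      using Suc rec by (simp add: yvar_eq)
  qed
qed

definition denom_fps :: "nat \<Rightarrow> int poly fract fps" where
  "denom_fps a = 1 - fps_X * (1 + yvar) + fps_X ^ a * yvar"

lemma undominated_gf_Cons:
  "undominated_gf (b # bs) * denom_fps (Suc b) = (1 - fps_X) + fps_X ^ Suc b * yvar * undominated_gf bs"
proof -
  let ?G = "undominated_gf (b # bs)" and ?G' = "undominated_gf bs" and ?X = "fps_X :: int poly fract fps"
  have "(1 - ?X) * ?G =
        (1 - ?X) + ?X * yvar * (((1 - ?X) * geom_tail b) * ?G' + ((1 - ?X) * geom_head b) * ?G)"
    by (subst undominated_gf_Cons_rec) (simp add: algebra_simps)
  then have "(1 - ?X) * ?G = (1 - ?X) + ?X * yvar * (?X ^ b * ?G' + (1 - ?X ^ b) * ?G)"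
    by (simp only: one_minus_X_times_geom_head one_minus_X_times_geom_tail)
  then show ?thesis
    unfolding denom_fps_def by (simp add: algebra_simps)
qed

definition rhs_gf :: "nat list \<Rightarrow> int poly fract fps" where
  "rhs_gf as = (\<Sum>j<length as. fps_X ^ (\<Sum>i<j. as ! i) * yvar ^ j * (1 - fps_X) *
                               inverse (\<Prod>i<Suc j. denom_fps (as ! i)))"

lemma denom_fps_nth_0: "0 < a \<Longrightarrow> denom_fps a $ 0 = 1"
  by (simp add: denom_fps_def yvar_def)

lemma fps_prod_nth_0: "finite A \<Longrightarrow> (\<Prod>i\<in>A. f i) $ 0 = (\<Prod>i\<in>A. (f i :: 'a :: comm_ring_1 fps) $ 0)"
  by (induction A rule: finite_induct) simp_all

lemma rhs_gf_Nil: "rhs_gf [] = 0"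
  by (simp add: rhs_gf_def)

lemma rhs_gf_Cons:
  "rhs_gf (a # as) = inverse (denom_fps a) * ((1 - fps_X) + fps_X ^ a * yvar * rhs_gf as)"
proof -
  have shift: "fps_X ^ (\<Sum>i<Suc j. (a # as) ! i) * yvar ^ Suc j * (1 - fps_X) *
                 inverse (\<Prod>i<Suc (Suc j). denom_fps ((a # as) ! i)) =
               inverse (denom_fps a) * (fps_X ^ a * yvar * (fps_X ^ (\<Sum>i<j. as ! i) * yvar ^ j *
                 (1 - fps_X) * inverse (\<Prod>i<Suc j. denom_fps (as ! i))))" for j
    by (simp add: sum.lessThan_Suc_shift prod.lessThan_Suc_shift fps_inverse_mult power_add mult_ac
             del: sum.lessThan_Suc prod.lessThan_Suc)
  have "rhs_gf (a # as) = (1 - fps_X) * inverse (denom_fps a) +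
     (\<Sum>j<length as. fps_X ^ (\<Sum>i<Suc j. (a # as) ! i) * yvar ^ Suc j * (1 - fps_X) *
        inverse (\<Prod>i<Suc (Suc j). denom_fps ((a # as) ! i)))"
    unfolding rhs_gf_def by (simp add: sum.lessThan_Suc_shift del: sum.lessThan_Suc)
  then show ?thesis
    unfolding shift rhs_gf_def by (simp add: sum_distrib_left algebra_simps)
qed

lemma undominated_gf_eq_rhs_gf:
  "\<forall>x\<in>set a. 0 < x \<Longrightarrow> undominated_gf (map (\<lambda>x. x - 1) a) = rhs_gf a"
proof (induction a)
  case Nil
  then show ?case
    by (simp add: undominated_gf_Nil rhs_gf_Nil)
next
  case (Cons a as)
  then have "0 < a" and IH: "undominated_gf (map (\<lambda>x. x - 1) as) = rhs_gf as"
    by auto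
  then have unit: "denom_fps a $ 0 = 1"
    by (simp add: denom_fps_nth_0)
  have "undominated_gf (map (\<lambda>x. x - 1) (a # as)) * denom_fps a
        = (1 - fps_X) + fps_X ^ a * yvar * rhs_gf as"
    using undominated_gf_Cons[of "a - 1" "map (\<lambda>x. x - 1) as"] \<open>0 < a\<close> IH by simp
  also have "\<dots> = rhs_gf (a # as) * denom_fps a"
    unfolding rhs_gf_Cons using inverse_mult_eq_1[of "denom_fps a"] unit by (simp add: mult_ac)
  finally have "undominated_gf (map (\<lambda>x. x - 1) (a # as)) * denom_fps a = rhs_gf (a # as) * denom_fps a" .
  moreover have "denom_fps a \<noteq> 0"
    using unit by auto
  ultimately show ?case
    by simp
qed

theorem theorem2p5:
  fixes a :: "nat list"
  assumes "a \<noteq> []" and "\<forall>x\<in>set a. 0 < x"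
  shows "Fgf a =
    (\<Sum>j<length a.
        fps_X ^ (\<Sum>i<j. a ! i) * yvar ^ j * (1 - fps_X) /
        (\<Prod>i<Suc j. 1 - fps_X * (1 + yvar) + fps_X ^ (a ! i) * yvar))"
proof -
  have "(\<Prod>i<Suc j. denom_fps (a ! i)) $ 0 = 1" if "j < length a" for j
    using that assms(2) by (simp add: fps_prod_nth_0 denom_fps_nth_0)
  then have "(\<Sum>j<length a. fps_X ^ (\<Sum>i<j. a ! i) * yvar ^ j * (1 - fps_X) /
                (\<Prod>i<Suc j. denom_fps (a ! i))) = rhs_gf a"
    unfolding rhs_gf_def by (intro sum.cong refl) (simp add: fps_divide_unit)
  then show ?thesis
    using undominated_gf_eq_rhs_gf[OF assms(2)] by (simp add: Fgf_eq_undominated_gf denom_fps_def)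
qed

end
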